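(* Let $G$ and $H$ be non-empty locally finite graphs. If $N(G)\cong N(H)$ as simplicial complexes, then $K_2\times G$ and $K_2\times H$ are $\times$-homotopy equivalent.
   Context: A graph $G$ is a set $V(G)$ with a symmetric subset $E(G)\subset V(G)\times V(G)$ (loops allowed); $N(v)=\{w:(v,w)\in E(G)\}$; $G$ is locally finite if every $N(v)$ is finite. The neighborhood complex $N(G)$ is the simplicial complex whose vertices are the non-isolated vertices of $G$ and whose simplices are the finite subsets contained in some $N(v)$. $K_2\times G$ has vertex set $\{1,2\}\times V(G)$, $((i,x),(j,y))$ an edge iff $i\neq j$ and $(x,y)\in E(G)$. For $n\ge0$, $I_n$ is the graph with vertices $\{0,\dots,n\}$ and edges $(x,y)$ with $|x-y|\le1$ (so with loops). Graph homomorphisms $f,g:G\to H$ are $\times$-homotopic if for some $n\ge0$ there is a graph homomorphism $K:G\times I_n\to H$ (tensor product: $((x,i),(x',j))$ an edge iff $(x,x')\in E(G)$ and $|i-j|\le1$) with $K(x,0)=f(x)$ and $K(x,n)=g(x)$; this generates an equivalence relation $\simeq_\times$. $f:G\to H$ is a $\times$-homotopy equivalence if there is $h:H\to G$ with $hf\simeq_\times\mathrm{id}_G$ and $fh\simeq_\times\mathrm{id}_H$. *)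

theory Defs
  imports Main
begin

text \<open>A graph is a vertex set together with a symmetric edge relation on it (loops allowed).\<close>
type_synonym 'a graph = "'a set \<times> ('a \<times> 'a) set"

definition verts :: "'a graph \<Rightarrow> 'a set" where "verts G = fst G"
definition edges :: "'a graph \<Rightarrow> ('a \<times> 'a) set" where "edges G = snd G"

definition is_graph :: "'a graph \<Rightarrow> bool" where
  "is_graph G \<longleftrightarrow> edges G \<subseteq> verts G \<times> verts G \<and> sym (edges G)"

definition nbhd :: "'a graph \<Rightarrow> 'a \<Rightarrow> 'a set" where
  "nbhd G v = {w. (v, w) \<in> edges G}"

definition locally_finite :: "'a graph \<Rightarrow> bool" where
  "locally_finite G \<longleftrightarrow> (\<forall>v\<in>verts G. finite (nbhd G v))"

definition nc_verts :: "'a graph \<Rightarrow> 'a set" where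
  "nc_verts G = {v \<in> verts G. nbhd G v \<noteq> {}}"

definition nc_simplices :: "'a graph \<Rightarrow> 'a set set" where
  "nc_simplices G = {\<sigma>. finite \<sigma> \<and> (\<exists>v\<in>verts G. \<sigma> \<subseteq> nbhd G v)}"

definition nc_isomorphic :: "'a graph \<Rightarrow> 'b graph \<Rightarrow> bool" where
  "nc_isomorphic G H \<longleftrightarrow> (\<exists>f. bij_betw f (nc_verts G) (nc_verts H) \<and>
     (\<forall>\<sigma>. \<sigma> \<subseteq> nc_verts G \<longrightarrow> (\<sigma> \<in> nc_simplices G \<longleftrightarrow> f ` \<sigma> \<in> nc_simplices H)))"

definition graph_hom :: "'a graph \<Rightarrow> 'b graph \<Rightarrow> ('a \<Rightarrow> 'b) \<Rightarrow> bool" where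
  "graph_hom G H f \<longleftrightarrow> (\<forall>x\<in>verts G. f x \<in> verts H) \<and>
     (\<forall>x y. (x, y) \<in> edges G \<longrightarrow> (f x, f y) \<in> edges H)"

definition K2_times :: "'a graph \<Rightarrow> (nat \<times> 'a) graph" where
  "K2_times G = ({1,2} \<times> verts G,
     {((i, x), (j, y)). i \<in> {1,2} \<and> j \<in> {1,2} \<and> i \<noteq> j \<and> (x, y) \<in> edges G})"

definition times_I :: "'a graph \<Rightarrow> nat \<Rightarrow> ('a \<times> nat) graph" where
  "times_I G n = (verts G \<times> {0..n},
     {((x, i), (x', j)). (x, x') \<in> edges G \<and> i \<le> n \<and> j \<le> n \<and> i \<le> j + 1 \<and> j \<le> i + 1})"

definition times_homotopic_step :: "'a graph \<Rightarrow> 'b graph \<Rightarrow> ('a \<Rightarrow> 'b) \<Rightarrow> ('a \<Rightarrow> 'b) \<Rightarrow> bool" where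
  "times_homotopic_step G H f g \<longleftrightarrow> graph_hom G H f \<and> graph_hom G H g \<and>
     (\<exists>n K. graph_hom (times_I G n) H K \<and>
        (\<forall>x\<in>verts G. K (x, 0) = f x \<and> K (x, n) = g x))"

definition times_homotopic :: "'a graph \<Rightarrow> 'b graph \<Rightarrow> ('a \<Rightarrow> 'b) \<Rightarrow> ('a \<Rightarrow> 'b) \<Rightarrow> bool" where
  "times_homotopic G H f g \<longleftrightarrow>
     (\<lambda>f g. f = g \<or> times_homotopic_step G H f g \<or> times_homotopic_step G H g f)\<^sup>*\<^sup>* f g"

definition times_homotopy_equivalent :: "'a graph \<Rightarrow> 'b graph \<Rightarrow> bool" where
  "times_homotopy_equivalent G H \<longleftrightarrow> (\<exists>f h. graph_hom G H f \<and> graph_hom H G h \<and>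
     times_homotopic G G (h \<circ> f) id \<and> times_homotopic H H (f \<circ> h) id)"

end

theory Submission
  imports Defs
begin

text \<open>The complex \<open>N(G)\<close> only records which finite sets of vertices lie in a common
  neighbourhood. An isomorphism \<open>N(G) \<cong> N(H)\<close>, extended arbitrarily to isolated vertices,
  therefore gives maps \<open>\<alpha> : V(G) \<rightarrow> V(H)\<close>, \<open>\<beta> : V(H) \<rightarrow> V(G)\<close> which, by local finiteness,
  send every whole neighbourhood \<open>N(x)\<close> into some neighbourhood \<open>N(\<psi> x)\<close>, and which are
  mutually inverse on non-isolated vertices. On \<open>K\<^sub>2 \<times> G\<close> the map \<open>(1,x) \<mapsto> (1,\<alpha> x)\<close>,
  \<open>(2,x) \<mapsto> (2,\<psi> x)\<close> is then a graph homomorphism, and composing it with the analogous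
  map for \<open>\<beta>\<close> gives an endomorphism \<open>M\<close> of \<open>K\<^sub>2 \<times> G\<close> with \<open>N(v) \<subseteq> N(M v)\<close> for all \<open>v\<close>;
  such an \<open>M\<close> is \<open>\<times>\<close>-homotopic to the identity by a homotopy of length one.\<close>

lemma K2_times_verts [simp]: "verts (K2_times G) = {1,2} \<times> verts G"
  by (simp add: K2_times_def verts_def)

lemma K2_times_edges [simp]:
  "((i, x), (j, y)) \<in> edges (K2_times G) \<longleftrightarrow>
     i \<in> {1,2} \<and> j \<in> {1,2} \<and> i \<noteq> j \<and> (x, y) \<in> edges G"
  by (simp add: K2_times_def edges_def)

lemma is_graph_edge_sym: "is_graph G \<Longrightarrow> (x, y) \<in> edges G \<Longrightarrow> (y, x) \<in> edges G"
  unfolding is_graph_def sym_def by blast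

lemma is_graph_edge_verts:
  "is_graph G \<Longrightarrow> (x, y) \<in> edges G \<Longrightarrow> x \<in> verts G \<and> y \<in> verts G"
  unfolding is_graph_def by blast

lemma nbhd_subset_nc_verts: "is_graph G \<Longrightarrow> nbhd G x \<subseteq> nc_verts G"
  by (auto simp: nbhd_def nc_verts_def dest: is_graph_edge_sym is_graph_edge_verts)

lemma nc_verts_subset_verts: "nc_verts G \<subseteq> verts G"
  by (auto simp: nc_verts_def)

lemma sym_K2_times_edges: "is_graph G \<Longrightarrow> sym (edges (K2_times G))"
  by (auto simp: sym_def dest: is_graph_edge_sym)

lemma graph_hom_comp: "graph_hom A B f \<Longrightarrow> graph_hom B C g \<Longrightarrow> graph_hom A C (g \<circ> f)"
  unfolding graph_hom_def by auto

lemma graph_hom_id: "graph_hom G G id"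
  by (simp add: graph_hom_def)

lemma times_homotopic_id_if_nbhd_subset:
  assumes sym: "sym (edges K)" and M: "graph_hom K K M"
    and nbhd: "\<And>a. nbhd K a \<subseteq> nbhd K (M a)"
  shows "times_homotopic K K M id"
proof -
  let ?hom = "\<lambda>(v, t::nat). if t = 0 then M v else v"
  have edge: "(M a, b) \<in> edges K" if "(a, b) \<in> edges K" for a b
    using nbhd[of a] that by (auto simp: nbhd_def)
  have "graph_hom (times_I K 1) K ?hom"
    unfolding graph_hom_def
  proof (intro conjI allI impI ballI)
    fix p assume "p \<in> verts (times_I K 1)"
    then show "?hom p \<in> verts K"
      using M by (auto simp: times_I_def verts_def graph_hom_def)
  next
    fix p q assume "(p, q) \<in> edges (times_I K 1)"
    then obtain a s b t where pq: "p = (a, s)" "q = (b, t)" and ab: "(a, b) \<in> edges K"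
      by (auto simp: times_I_def edges_def)
    have "(M a, M b) \<in> edges K" using M ab by (auto simp: graph_hom_def)
    moreover have "(a, M b) \<in> edges K"
      using edge[OF symD[OF sym ab]] symD[OF sym] by blast
    ultimately show "(?hom p, ?hom q) \<in> edges K"
      using ab edge[OF ab] by (auto simp: pq)
  qed
  then have "times_homotopic_step K K M id"
    unfolding times_homotopic_step_def using M graph_hom_id[of K]
    by (intro conjI exI[of _ 1]) auto
  then show ?thesis unfolding times_homotopic_def by auto
qed

definition nbhd_preserving :: "'a graph \<Rightarrow> 'b graph \<Rightarrow> ('a \<Rightarrow> 'b) \<Rightarrow> bool" where
  "nbhd_preserving G H \<alpha> \<longleftrightarrow>
     (\<forall>x\<in>verts G. \<alpha> x \<in> verts H \<and> (\<exists>w\<in>verts H. \<alpha> ` nbhd G x \<subseteq> nbhd H w))"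

definition K2_lift :: "('a \<Rightarrow> 'b) \<Rightarrow> ('a \<Rightarrow> 'b) \<Rightarrow> nat \<times> 'a \<Rightarrow> nat \<times> 'b" where
  "K2_lift \<alpha> \<psi> = (\<lambda>(i, x). (i, if i = 1 then \<alpha> x else \<psi> x))"

lemma nbhd_preserving_witness:
  assumes "nbhd_preserving G H \<alpha>"
  obtains \<psi> where "\<forall>x\<in>verts G. \<psi> x \<in> verts H \<and> \<alpha> ` nbhd G x \<subseteq> nbhd H (\<psi> x)"
  using assms unfolding nbhd_preserving_def by metis

lemma graph_hom_K2_lift:
  assumes G: "is_graph G" and H: "is_graph H"
    and \<alpha>: "\<forall>x\<in>verts G. \<alpha> x \<in> verts H"
    and \<psi>: "\<forall>x\<in>verts G. \<psi> x \<in> verts H \<and> \<alpha> ` nbhd G x \<subseteq> nbhd H (\<psi> x)"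
  shows "graph_hom (K2_times G) (K2_times H) (K2_lift \<alpha> \<psi>)"
  unfolding graph_hom_def
proof (intro conjI allI impI ballI)
  fix v assume "v \<in> verts (K2_times G)"
  then show "K2_lift \<alpha> \<psi> v \<in> verts (K2_times H)"
    using \<alpha> \<psi> by (auto simp: K2_lift_def)
next
  fix a b assume "(a, b) \<in> edges (K2_times G)"
  then obtain i x j y where ab: "a = (i, x)" "b = (j, y)"
    and ij: "i \<in> {1,2}" "j \<in> {1,2}" "i \<noteq> j" and xy: "(x, y) \<in> edges G"
    by (cases a; cases b) auto
  have "\<alpha> x \<in> nbhd H (\<psi> y)"
    using \<psi> is_graph_edge_verts[OF G xy] is_graph_edge_sym[OF G xy]
    by (auto simp: nbhd_def)
  then have "(\<alpha> x, \<psi> y) \<in> edges H" by (auto simp: nbhd_def dest: is_graph_edge_sym[OF H])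
  moreover have "(\<psi> x, \<alpha> y) \<in> edges H"
    using \<psi> is_graph_edge_verts[OF G xy] xy by (auto simp: nbhd_def)
  ultimately show "(K2_lift \<alpha> \<psi> a, K2_lift \<alpha> \<psi> b) \<in> edges (K2_times H)"
    using ij by (auto simp: ab K2_lift_def)
qed

lemma K2_lift_comp_homotopic_id:
  assumes G: "is_graph G" and H: "is_graph H"
    and \<alpha>: "\<forall>x\<in>verts G. \<alpha> x \<in> verts H" and \<beta>: "\<forall>y\<in>verts H. \<beta> y \<in> verts G"
    and inv: "\<forall>x\<in>nc_verts G. \<beta> (\<alpha> x) = x"
    and \<psi>: "\<forall>x\<in>verts G. \<psi> x \<in> verts H \<and> \<alpha> ` nbhd G x \<subseteq> nbhd H (\<psi> x)"
    and \<psi>': "\<forall>y\<in>verts H. \<psi>' y \<in> verts G \<and> \<beta> ` nbhd H y \<subseteq> nbhd G (\<psi>' y)"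
  shows "times_homotopic (K2_times G) (K2_times G) (K2_lift \<beta> \<psi>' \<circ> K2_lift \<alpha> \<psi>) id"
proof (rule times_homotopic_id_if_nbhd_subset[OF sym_K2_times_edges[OF G]])
  show "graph_hom (K2_times G) (K2_times G) (K2_lift \<beta> \<psi>' \<circ> K2_lift \<alpha> \<psi>)"
    using graph_hom_comp graph_hom_K2_lift[OF G H \<alpha> \<psi>] graph_hom_K2_lift[OF H G \<beta> \<psi>'] .
  fix a
  show "nbhd (K2_times G) a \<subseteq> nbhd (K2_times G) ((K2_lift \<beta> \<psi>' \<circ> K2_lift \<alpha> \<psi>) a)"
  proof
    fix b assume "b \<in> nbhd (K2_times G) a"
    then obtain i x j y where ab: "a = (i, x)" "b = (j, y)"
      and ij: "i \<in> {1,2}" "j \<in> {1,2}" "i \<noteq> j" and xy: "(x, y) \<in> edges G"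
      by (cases a; cases b) (auto simp: nbhd_def)
    have nc: "x \<in> nc_verts G" "y \<in> nc_verts G"
      using nbhd_subset_nc_verts[OF G] xy is_graph_edge_sym[OF G xy] by (auto simp: nbhd_def)
    have x: "x \<in> verts G" using nc(1) nc_verts_subset_verts[of G] by blast
    have "\<alpha> y \<in> nbhd H (\<psi> x)" using \<psi> x xy by (auto simp: nbhd_def)
    then have "\<beta> (\<alpha> y) \<in> nbhd G (\<psi>' (\<psi> x))" using \<psi> \<psi>' x by blast
    then have "(\<psi>' (\<psi> x), y) \<in> edges G" using inv nc by (simp add: nbhd_def)
    then show "b \<in> nbhd (K2_times G) ((K2_lift \<beta> \<psi>' \<circ> K2_lift \<alpha> \<psi>) a)"
      using ij xy inv nc by (auto simp: ab K2_lift_def nbhd_def)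
  qed
qed

lemma times_homotopy_equivalent_K2_timesI:
  assumes G: "is_graph G" and H: "is_graph H"
    and \<alpha>: "nbhd_preserving G H \<alpha>" and \<beta>: "nbhd_preserving H G \<beta>"
    and \<beta>\<alpha>: "\<forall>x\<in>nc_verts G. \<beta> (\<alpha> x) = x" and \<alpha>\<beta>: "\<forall>y\<in>nc_verts H. \<alpha> (\<beta> y) = y"
  shows "times_homotopy_equivalent (K2_times G) (K2_times H)"
proof -
  obtain \<psi> where \<psi>: "\<forall>x\<in>verts G. \<psi> x \<in> verts H \<and> \<alpha> ` nbhd G x \<subseteq> nbhd H (\<psi> x)"
    using nbhd_preserving_witness[OF \<alpha>] .
  obtain \<psi>' where \<psi>': "\<forall>y\<in>verts H. \<psi>' y \<in> verts G \<and> \<beta> ` nbhd H y \<subseteq> nbhd G (\<psi>' y)"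
    using nbhd_preserving_witness[OF \<beta>] .
  have \<alpha>_verts: "\<forall>x\<in>verts G. \<alpha> x \<in> verts H" and \<beta>_verts: "\<forall>y\<in>verts H. \<beta> y \<in> verts G"
    using \<alpha> \<beta> by (auto simp: nbhd_preserving_def)
  show ?thesis unfolding times_homotopy_equivalent_def
    using graph_hom_K2_lift[OF G H \<alpha>_verts \<psi>] graph_hom_K2_lift[OF H G \<beta>_verts \<psi>']
      K2_lift_comp_homotopic_id[OF G H \<alpha>_verts \<beta>_verts \<beta>\<alpha> \<psi> \<psi>']
      K2_lift_comp_homotopic_id[OF H G \<beta>_verts \<alpha>_verts \<alpha>\<beta> \<psi>' \<psi>]
    by blast
qed

lemma nbhd_preservingI:
  assumes G: "is_graph G" and fin: "locally_finite G"
    and verts: "\<forall>x\<in>verts G. \<alpha> x \<in> verts H"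
    and simplicial: "\<And>\<sigma>. \<sigma> \<subseteq> nc_verts G \<Longrightarrow> \<sigma> \<in> nc_simplices G \<Longrightarrow> \<alpha> ` \<sigma> \<in> nc_simplices H"
  shows "nbhd_preserving G H \<alpha>"
  unfolding nbhd_preserving_def
proof (intro ballI conjI)
  fix x assume x: "x \<in> verts G"
  then show "\<alpha> x \<in> verts H" using verts by blast
  have "nbhd G x \<in> nc_simplices G"
    using fin x by (auto simp: nc_simplices_def locally_finite_def)
  then have "\<alpha> ` nbhd G x \<in> nc_simplices H"
    using simplicial nbhd_subset_nc_verts[OF G] by blast
  then show "\<exists>w\<in>verts H. \<alpha> ` nbhd G x \<subseteq> nbhd H w"
    by (auto simp: nc_simplices_def)
qed

lemma nc_isomorphic_nbhd_preserving_inverses: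
  fixes G :: "'a graph" and H :: "'b graph"
  assumes G: "is_graph G" and H: "is_graph H"
    and "verts G \<noteq> {}" and "verts H \<noteq> {}"
    and fin_G: "locally_finite G" and fin_H: "locally_finite H"
    and "nc_isomorphic G H"
  obtains \<alpha> \<beta> where "nbhd_preserving G H \<alpha>" and "nbhd_preserving H G \<beta>"
    and "\<forall>x\<in>nc_verts G. \<beta> (\<alpha> x) = x" and "\<forall>y\<in>nc_verts H. \<alpha> (\<beta> y) = y"
proof -
  obtain \<phi> where bij: "bij_betw \<phi> (nc_verts G) (nc_verts H)"
    and simplicial: "\<forall>\<sigma>. \<sigma> \<subseteq> nc_verts G \<longrightarrow> (\<sigma> \<in> nc_simplices G \<longleftrightarrow> \<phi> ` \<sigma> \<in> nc_simplices H)"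
    using assms(7) unfolding nc_isomorphic_def by blast
  obtain g0 h0 where g0: "g0 \<in> verts G" and h0: "h0 \<in> verts H"
    using assms(3,4) by blast
  define \<alpha> where "\<alpha> x = (if x \<in> nc_verts G then \<phi> x else h0)" for x
  define \<beta> where "\<beta> y = (if y \<in> nc_verts H then inv_into (nc_verts G) \<phi> y else g0)" for y
  have \<beta>\<alpha>: "\<forall>x\<in>nc_verts G. \<beta> (\<alpha> x) = x" and \<alpha>\<beta>: "\<forall>y\<in>nc_verts H. \<alpha> (\<beta> y) = y"
    and \<beta>_nc: "\<forall>y\<in>nc_verts H. \<beta> y \<in> nc_verts G"
    using bij by (auto simp: \<alpha>_def \<beta>_def bij_betw_def inv_into_into f_inv_into_f)
  have "nbhd_preserving G H \<alpha>"
  proof (rule nbhd_preservingI[OF G fin_G])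
    show "\<forall>x\<in>verts G. \<alpha> x \<in> verts H"
      using bij h0 nc_verts_subset_verts[of H] by (auto simp: \<alpha>_def bij_betw_def)
    fix \<sigma> assume \<sigma>: "\<sigma> \<subseteq> nc_verts G" "\<sigma> \<in> nc_simplices G"
    have "\<alpha> ` \<sigma> = \<phi> ` \<sigma>" using \<sigma>(1) by (force simp: \<alpha>_def)
    then show "\<alpha> ` \<sigma> \<in> nc_simplices H" using simplicial \<sigma> by simp
  qed
  moreover have "nbhd_preserving H G \<beta>"
  proof (rule nbhd_preservingI[OF H fin_H])
    show "\<forall>y\<in>verts H. \<beta> y \<in> verts G"
      using \<beta>_nc g0 nc_verts_subset_verts[of G] by (auto simp: \<beta>_def)
    fix \<tau> assume \<tau>: "\<tau> \<subseteq> nc_verts H" "\<tau> \<in> nc_simplices H"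
    have "\<phi> ` \<beta> ` \<tau> = \<alpha> ` \<beta> ` \<tau>" using \<tau>(1) \<beta>_nc by (force simp: \<alpha>_def)
    also have "\<dots> = \<tau>" using \<tau>(1) \<alpha>\<beta> by (force simp: image_image)
    finally show "\<beta> ` \<tau> \<in> nc_simplices G" using simplicial \<tau> \<beta>_nc by (metis image_subset_iff subsetD)
  qed
  ultimately show ?thesis using that \<beta>\<alpha> \<alpha>\<beta> by blast
qed

theorem proposition4p10:
  fixes G :: "'a graph" and H :: "'b graph"
  assumes "is_graph G" and "is_graph H"
    and "verts G \<noteq> {}" and "verts H \<noteq> {}"
    and "locally_finite G" and "locally_finite H"
    and "nc_isomorphic G H"
  shows "times_homotopy_equivalent (K2_times G) (K2_times H)"
proof -
  obtain \<alpha> \<beta> where "nbhd_preserving G H \<alpha>" and "nbhd_preserving H G \<beta>"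
    and "\<forall>x\<in>nc_verts G. \<beta> (\<alpha> x) = x" and "\<forall>y\<in>nc_verts H. \<alpha> (\<beta> y) = y"
    using nc_isomorphic_nbhd_preserving_inverses[OF assms] .
  then show ?thesis
    using times_homotopy_equivalent_K2_timesI[OF assms(1,2)] by blast
qed

end
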